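(* For all graphs $G_1,G_2$ (for which the sums below are defined): (i) $f_\infty(G_1+_vG_2)=\max\{f_\infty(G_1),f_\infty(G_2)\}$; (ii) $f_\infty(G_1+_{vw}G_2)\le f_\infty(G_1\oplus_{vw}G_2)\le f_\infty(G_1)+f_\infty(G_2)-1$; (iii) if $G$ is a $k$-sum of $G_1$ and $G_2$ (for any $k$), then $f_\infty(G)\le f_\infty(G_1)+f_\infty(G_2)$.
   Context: A distance function on a graph $G$ is $d:E(G)\to\mathbb{R}_{\ge0}$ with $d(vw)\le\sum_i d(v_{i-1}v_i)$ for every edge $vw$ and every $v$–$w$ path. $f_\infty(G)$ is the least $k$ such that for every distance function $d$ on $G$ there is $\phi:V(G)\to\mathbb{R}^k$ with $\|\phi(v)-\phi(w)\|_\infty=d(vw)$ for all edges $vw$. A $k$-sum of $G_1$ and $G_2$ is a graph obtained by gluing $G_1$ and $G_2$ along a common clique of size $k$ (identifying the clique vertices, $G_1$ and $G_2$ otherwise disjoint) and then possibly deleting some edges of that clique. $G_1+_vG_2$ denotes $G_1\cup G_2$ where $V(G_1)\cap V(G_2)=\{v\}$. $G_1\oplus_{vw}G_2$ denotes $G_1\cup G_2$ where $V(G_1)\cap V(G_2)=\{v,w\}$ and $vw\in E(G_1)\cap E(G_2)$; $G_1+_{vw}G_2$ is $G_1\oplus_{vw}G_2$ with the edge $vw$ deleted. *)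

theory Defs
  imports Complex_Main
begin

type_synonym 'a graph = "'a set \<times> 'a set set"

definition verts :: "'a graph \<Rightarrow> 'a set" where "verts G = fst G"
definition edges :: "'a graph \<Rightarrow> 'a set set" where "edges G = snd G"

definition graph :: "'a graph \<Rightarrow> bool" where
  "graph G \<longleftrightarrow> finite (verts G) \<and>
     (\<forall>e\<in>edges G. \<exists>u v. e = {u, v} \<and> u \<noteq> v \<and> u \<in> verts G \<and> v \<in> verts G)"

definition is_path :: "'a graph \<Rightarrow> 'a list \<Rightarrow> 'a \<Rightarrow> 'a \<Rightarrow> bool" where
  "is_path G xs v w \<longleftrightarrow> xs \<noteq> [] \<and> hd xs = v \<and> last xs = w \<and> distinct xs \<and>
     set xs \<subseteq> verts G \<and> (\<forall>i < length xs - 1. {xs ! i, xs ! Suc i} \<in> edges G)"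

definition path_length :: "('a set \<Rightarrow> real) \<Rightarrow> 'a list \<Rightarrow> real" where
  "path_length d xs = (\<Sum>i < length xs - 1. d {xs ! i, xs ! Suc i})"

text \<open>Distance function on G (only its values on edges matter).\<close>
definition distance_function :: "'a graph \<Rightarrow> ('a set \<Rightarrow> real) \<Rightarrow> bool" where
  "distance_function G d \<longleftrightarrow> (\<forall>e\<in>edges G. 0 \<le> d e) \<and>
     (\<forall>v w xs. {v, w} \<in> edges G \<longrightarrow> is_path G xs v w \<longrightarrow> d {v, w} \<le> path_length d xs)"

text \<open>The sup-norm distance in R^k, points of R^k represented as nat => real
  (only coordinates 0..k-1 are used); for k = 0 it is 0.\<close>
definition linf_dist :: "nat \<Rightarrow> (nat \<Rightarrow> real) \<Rightarrow> (nat \<Rightarrow> real) \<Rightarrow> real" where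
  "linf_dist k x y = Max (insert 0 ((\<lambda>i. \<bar>x i - y i\<bar>) ` {..<k}))"

definition f_inf :: "'a graph \<Rightarrow> nat" where
  "f_inf G = (LEAST k. \<forall>d. distance_function G d \<longrightarrow>
      (\<exists>\<phi> :: 'a \<Rightarrow> nat \<Rightarrow> real. \<forall>v w. {v, w} \<in> edges G \<longrightarrow> linf_dist k (\<phi> v) (\<phi> w) = d {v, w}))"

definition graph_union :: "'a graph \<Rightarrow> 'a graph \<Rightarrow> 'a graph" where
  "graph_union G1 G2 = (verts G1 \<union> verts G2, edges G1 \<union> edges G2)"

definition delete_edge :: "'a graph \<Rightarrow> 'a set \<Rightarrow> 'a graph" where
  "delete_edge G e = (verts G, edges G - {e})"

definition is_clique :: "'a graph \<Rightarrow> 'a set \<Rightarrow> bool" where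
  "is_clique G C \<longleftrightarrow> C \<subseteq> verts G \<and> (\<forall>x\<in>C. \<forall>y\<in>C. x \<noteq> y \<longrightarrow> {x, y} \<in> edges G)"

definition is_k_sum :: "nat \<Rightarrow> 'a graph \<Rightarrow> 'a graph \<Rightarrow> 'a graph \<Rightarrow> bool" where
  "is_k_sum k G G1 G2 \<longleftrightarrow> (let C = verts G1 \<inter> verts G2 in
     card C = k \<and> is_clique G1 C \<and> is_clique G2 C \<and>
     (\<exists>F. F \<subseteq> {{x, y} | x y. x \<in> C \<and> y \<in> C \<and> x \<noteq> y} \<and>
          G = (verts G1 \<union> verts G2, (edges G1 \<union> edges G2) - F)))"

end

theory Submission
  imports Defs "HOL-Combinatorics.Transposition"
begin

text \<open>Fix a distance function \<open>d\<close> on the sum and realize its restrictions to both sides in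
  \<open>\<ell>\<^sub>\<infinity>\<close>. Shortest paths turn \<open>d\<close> into a pseudometric \<open>D\<close> on all vertices that agrees with \<open>d\<close> on
  edges. On the shared clique every coordinate of a realization is 1-Lipschitz for \<open>D\<close>, so by
  McShane's formula it extends to a 1-Lipschitz function on the other side. Stacking the
  coordinates of both sides gives \<open>k\<^sub>1 + k\<^sub>2\<close> for any clique sum; for a 2-sum one coordinate
  realizing \<open>vw\<close> can be normalized on both sides and shared, giving \<open>k\<^sub>1 + k\<^sub>2 - 1\<close>; for a 1-sum
  both realizations are translated to vanish at the cut vertex and glued directly, giving the
  maximum. The remaining inequalities come from monotonicity under subgraphs: a distance
  function on a subgraph extends to the whole graph by taking \<open>D\<close> on the new edges.\<close>

section \<open>Walks\<close>

fun walk :: "'a set set \<Rightarrow> 'a list \<Rightarrow> bool" where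
  "walk E (x # y # zs) \<longleftrightarrow> {x, y} \<in> E \<and> walk E (y # zs)"
| "walk E _ \<longleftrightarrow> True"

fun walk_length :: "('a set \<Rightarrow> real) \<Rightarrow> 'a list \<Rightarrow> real" where
  "walk_length d (x # y # zs) = d {x, y} + walk_length d (y # zs)"
| "walk_length d _ = 0"

definition walk_betw :: "'a set set \<Rightarrow> 'a \<Rightarrow> 'a list \<Rightarrow> 'a \<Rightarrow> bool" where
  "walk_betw E x xs y \<longleftrightarrow> xs \<noteq> [] \<and> hd xs = x \<and> last xs = y \<and> walk E xs"

definition reachable :: "'a set set \<Rightarrow> 'a \<Rightarrow> 'a \<Rightarrow> bool" where
  "reachable E x y \<longleftrightarrow> (\<exists>xs. walk_betw E x xs y)"

lemma walk_iff_nth: "walk E xs \<longleftrightarrow> (\<forall>i < length xs - 1. {xs ! i, xs ! Suc i} \<in> E)"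
  by (induction E xs rule: walk.induct) (auto simp: less_Suc_eq_0_disj)

lemma path_length_eq_walk_length: "path_length d xs = walk_length d xs"
proof (induction d xs rule: walk_length.induct)
  case (1 d x y zs)
  then show ?case
    unfolding path_length_def by (simp add: sum.lessThan_Suc_shift del: sum.lessThan_Suc)
qed (auto simp: path_length_def)

lemma walk_append: "walk E (xs @ y # ys) \<longleftrightarrow> walk E (xs @ [y]) \<and> walk E (y # ys)"
  by (induction E xs rule: walk.induct) auto

lemma walk_length_append:
  "walk_length d (xs @ y # ys) = walk_length d (xs @ [y]) + walk_length d (y # ys)"
  by (induction xs rule: induct_list012) auto

lemma walk_mono: "walk E xs \<Longrightarrow> E \<subseteq> E' \<Longrightarrow> walk E' xs"
  by (induction E xs rule: walk.induct) auto

lemma walk_length_nonneg: "walk E xs \<Longrightarrow> \<forall>e\<in>E. 0 \<le> d e \<Longrightarrow> 0 \<le> walk_length d xs"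
  by (induction E xs rule: walk.induct) auto

lemma walk_rev: "walk E (rev xs) \<longleftrightarrow> walk E xs"
proof (induction E xs rule: walk.induct)
  case (1 E x y zs)
  then show ?case using walk_append[of E "rev zs" y "[x]"] by (auto simp: insert_commute)
qed auto

lemma walk_length_rev: "walk_length d (rev xs) = walk_length d xs"
proof (induction d xs rule: walk_length.induct)
  case (1 d x y zs)
  then show ?case using walk_length_append[of d "rev zs" y "[x]"] by (simp add: insert_commute)
qed auto

lemma walk_vertices: "walk E xs \<Longrightarrow> set xs \<subseteq> insert (hd xs) (\<Union>E)"
  by (induction E xs rule: walk.induct) auto

lemma walk_length_one: "walk_length (\<lambda>_. 1) xs = real (length xs - 1)"
  by (induction xs rule: induct_list012) auto

lemma walk_betw_append:
  assumes p: "walk_betw E x p y" and q: "walk_betw E y q z"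
  shows "walk_betw E x (p @ tl q) z" "walk_length d (p @ tl q) = walk_length d p + walk_length d q"
proof -
  have p_eq: "p = butlast p @ [y]" and q_eq: "q = y # tl q"
    using p q unfolding walk_betw_def by (metis append_butlast_last_id, metis list.collapse)
  have pq: "p @ tl q = butlast p @ y # tl q" by (subst p_eq) simp
  have "last (p @ tl q) = z"
  proof (cases "tl q = []")
    case True
    then have "q = [y]" using q_eq by simp
    then show ?thesis using p q unfolding walk_betw_def by simp
  next
    case False
    have "last q = last (tl q)" using q_eq False by (metis last_ConsR)
    then show ?thesis using q False unfolding walk_betw_def by simp
  qed
  moreover have "walk E (p @ tl q)"
    using p q walk_append[of E "butlast p" y "tl q"]
    unfolding walk_betw_def pq p_eq[symmetric] q_eq[symmetric]
    by simp
  ultimately show "walk_betw E x (p @ tl q) z"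
    using p unfolding walk_betw_def by simp
  show "walk_length d (p @ tl q) = walk_length d p + walk_length d q"
    using walk_length_append[of d "butlast p" y "tl q"] unfolding pq p_eq[symmetric] q_eq[symmetric] .
qed

lemma walk_betw_rev: "walk_betw E x xs y \<Longrightarrow> walk_betw E y (rev xs) x"
  unfolding walk_betw_def by (simp add: hd_rev last_rev walk_rev)

lemma walk_betw_two_vertices: "walk_betw E x xs y \<Longrightarrow> x \<noteq> y \<Longrightarrow> 2 \<le> length xs"
  unfolding walk_betw_def by (cases xs; cases "tl xs") auto

lemma reachable_refl: "reachable E x x"
  unfolding reachable_def walk_betw_def by (rule exI[of _ "[x]"]) simp

lemma reachable_edge: "{x, y} \<in> E \<Longrightarrow> reachable E x y"
  unfolding reachable_def walk_betw_def by (rule exI[of _ "[x, y]"]) simp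

lemma reachable_sym: "reachable E x y \<Longrightarrow> reachable E y x"
  unfolding reachable_def by (metis walk_betw_rev)

lemma reachable_trans: "reachable E x y \<Longrightarrow> reachable E y z \<Longrightarrow> reachable E x z"
  unfolding reachable_def by (metis walk_betw_append(1))

lemma walk_betw_shorten:
  assumes "walk_betw E x xs y" and "\<forall>e\<in>E. 0 \<le> d e"
  shows "\<exists>ys. walk_betw E x ys y \<and> distinct ys \<and> set ys \<subseteq> set xs \<and>
           walk_length d ys \<le> walk_length d xs"
  using assms(1)
proof (induction "length xs" arbitrary: xs rule: less_induct)
  case less
  show ?case
  proof (cases "distinct xs")
    case False
    then obtain as z bs cs where xs: "xs = as @ z # (bs @ z # cs)"
      using not_distinct_decomp by fastforce
    let ?ys = "as @ z # cs"
    have walks: "walk E (as @ [z])" "walk E (z # bs @ [z])" "walk E (z # cs)"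
      using less.prems walk_append[of E as z "bs @ z # cs"] walk_append[of E "z # bs" z cs]
      unfolding xs walk_betw_def by auto
    have "walk_length d xs = walk_length d ?ys + walk_length d (z # bs @ [z])"
      using walk_length_append[of d as z "bs @ z # cs"] walk_length_append[of d as z cs]
        walk_length_append[of d "z # bs" z cs] unfolding xs by simp
    moreover have "0 \<le> walk_length d (z # bs @ [z])"
      using walk_length_nonneg walks(2) assms(2) by blast
    moreover have "walk_betw E x ?ys y"
      using less.prems walks walk_append[of E as z cs] unfolding xs walk_betw_def
      by (cases as) auto
    moreover have "length ?ys < length xs" "set ?ys \<subseteq> set xs" unfolding xs by auto
    ultimately show ?thesis using less.hyps by fastforce
  qed (use less.prems in blast)
qed

section \<open>Distance functions and the path pseudometric\<close>

definition edge_set :: "'a set set \<Rightarrow> bool" where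
  "edge_set E \<longleftrightarrow> finite E \<and> (\<forall>e\<in>E. \<exists>u v. e = {u, v} \<and> u \<noteq> v)"

lemma edge_set_finite_vertices: "edge_set E \<Longrightarrow> finite (\<Union>E)"
  unfolding edge_set_def by (metis finite.emptyI finite.insertI finite_Union)

lemma edge_set_edge_neq: "edge_set E \<Longrightarrow> {x, y} \<in> E \<Longrightarrow> x \<noteq> y"
  unfolding edge_set_def by (metis doubleton_eq_iff insert_absorb2)

lemma edge_set_subset: "edge_set E' \<Longrightarrow> E \<subseteq> E' \<Longrightarrow> edge_set E"
  unfolding edge_set_def by (meson finite_subset subset_iff)

lemma edge_set_Un: "edge_set E1 \<Longrightarrow> edge_set E2 \<Longrightarrow> edge_set (E1 \<union> E2)"
  unfolding edge_set_def by blast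

definition distance_fun :: "'a set set \<Rightarrow> ('a set \<Rightarrow> real) \<Rightarrow> bool" where
  "distance_fun E d \<longleftrightarrow> (\<forall>e\<in>E. 0 \<le> d e) \<and>
     (\<forall>x y xs. {x, y} \<in> E \<longrightarrow> walk_betw E x xs y \<longrightarrow> d {x, y} \<le> walk_length d xs)"

lemma distance_fun_nonneg: "distance_fun E d \<Longrightarrow> \<forall>e\<in>E. 0 \<le> d e"
  unfolding distance_fun_def by blast

lemma distance_fun_mono: "distance_fun E' d \<Longrightarrow> E \<subseteq> E' \<Longrightarrow> distance_fun E d"
  unfolding distance_fun_def walk_betw_def using walk_mono by blast

definition path_dist :: "'a set set \<Rightarrow> ('a set \<Rightarrow> real) \<Rightarrow> 'a \<Rightarrow> 'a \<Rightarrow> real" where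
  "path_dist E d x y = Min (walk_length d ` {xs. walk_betw E x xs y \<and> distinct xs})"

lemma finite_distinct_walks: "edge_set E \<Longrightarrow> finite {xs. walk_betw E x xs y \<and> distinct xs}"
proof (rule finite_subset)
  show "{xs. walk_betw E x xs y \<and> distinct xs} \<subseteq> {xs. set xs \<subseteq> insert x (\<Union>E) \<and> distinct xs}"
    using walk_vertices unfolding walk_betw_def by fastforce
  show "edge_set E \<Longrightarrow> finite {xs. set xs \<subseteq> insert x (\<Union>E) \<and> distinct xs}"
    by (intro finite_subset_distinct finite.insertI edge_set_finite_vertices)
qed

lemma distinct_walk_length_le_sum:
  assumes "walk E xs" "distinct xs" "finite E" "\<forall>e\<in>E. 0 \<le> d e"
  shows "walk_length d xs \<le> (\<Sum>e\<in>{e\<in>E. e \<subseteq> set xs}. d e)"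
  using assms(1,2)
proof (induction xs rule: induct_list012)
  case (3 x y zs)
  let ?S = "{e\<in>E. e \<subseteq> set (y # zs)}"
  have "{x, y} \<notin> ?S" using "3.prems"(2) by auto
  then have "d {x, y} + (\<Sum>e\<in>?S. d e) = (\<Sum>e\<in>insert {x, y} ?S. d e)"
    using assms(3) by simp
  also have "\<dots> \<le> (\<Sum>e\<in>{e\<in>E. e \<subseteq> set (x # y # zs)}. d e)"
    using "3.prems" assms(3,4) by (intro sum_mono2) auto
  finally show ?case using "3" by simp
qed (use assms(4) in \<open>auto intro: sum_nonneg\<close>)

context
  fixes E :: "'a set set" and d :: "'a set \<Rightarrow> real"
  assumes E: "edge_set E" and d_nonneg: "\<forall>e\<in>E. 0 \<le> d e"
begin

lemma path_dist_le_walk_length: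
  assumes "walk_betw E x xs y"
  shows "path_dist E d x y \<le> walk_length d xs"
proof -
  obtain ys where ys: "walk_betw E x ys y" "distinct ys" "walk_length d ys \<le> walk_length d xs"
    using walk_betw_shorten[OF assms d_nonneg] by blast
  have "path_dist E d x y \<le> walk_length d ys"
    unfolding path_dist_def using ys finite_distinct_walks[OF E] by (intro Min_le) auto
  with ys show ?thesis by linarith
qed

lemma path_dist_attained:
  assumes "reachable E x y"
  shows "\<exists>xs. walk_betw E x xs y \<and> distinct xs \<and> walk_length d xs = path_dist E d x y"
proof -
  have "{xs. walk_betw E x xs y \<and> distinct xs} \<noteq> {}"
    using assms walk_betw_shorten[OF _ d_nonneg] unfolding reachable_def by blast
  then show ?thesis
    using Min_in[of "walk_length d ` {xs. walk_betw E x xs y \<and> distinct xs}"]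
      finite_distinct_walks[OF E] unfolding path_dist_def by fastforce
qed

lemma path_dist_nonneg: "reachable E x y \<Longrightarrow> 0 \<le> path_dist E d x y"
  using path_dist_attained walk_length_nonneg d_nonneg unfolding walk_betw_def by metis

lemma path_dist_self: "path_dist E d x x = 0"
  using path_dist_le_walk_length[of x "[x]" x] path_dist_nonneg[OF reachable_refl, of x]
  unfolding walk_betw_def by simp

lemma path_dist_sym:
  assumes "reachable E x y"
  shows "path_dist E d y x = path_dist E d x y"
proof -
  have le: "path_dist E d b a \<le> path_dist E d a b" if ab: "reachable E a b" for a b
  proof -
    obtain xs where "walk_betw E a xs b" "walk_length d xs = path_dist E d a b"
      using path_dist_attained[OF ab] by blast
    then show ?thesis using path_dist_le_walk_length[OF walk_betw_rev] walk_length_rev by metis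
  qed
  show ?thesis using le[OF assms] le[OF reachable_sym[OF assms]] by linarith
qed

lemma path_dist_triangle:
  assumes "reachable E x y" "reachable E y z"
  shows "path_dist E d x z \<le> path_dist E d x y + path_dist E d y z"
proof -
  obtain p q where "walk_betw E x p y" "walk_length d p = path_dist E d x y"
    and "walk_betw E y q z" "walk_length d q = path_dist E d y z"
    using path_dist_attained assms by metis
  then show ?thesis using walk_betw_append path_dist_le_walk_length by metis
qed

lemma path_dist_le_sum: "reachable E x y \<Longrightarrow> path_dist E d x y \<le> (\<Sum>e\<in>E. d e)"
proof -
  assume "reachable E x y"
  then obtain xs where xs: "walk_betw E x xs y" "distinct xs" "walk_length d xs = path_dist E d x y"
    using path_dist_attained by blast
  have fin: "finite E" using E unfolding edge_set_def by blast
  have "walk_length d xs \<le> (\<Sum>e\<in>{e\<in>E. e \<subseteq> set xs}. d e)"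
    using distinct_walk_length_le_sum[OF _ xs(2) fin d_nonneg] xs(1) unfolding walk_betw_def by blast
  also have "\<dots> \<le> (\<Sum>e\<in>E. d e)" using fin d_nonneg by (intro sum_mono2) auto
  finally show ?thesis using xs(3) by simp
qed

lemma path_dist_edge:
  assumes "distance_fun E d" "{x, y} \<in> E"
  shows "path_dist E d x y = d {x, y}"
proof (rule antisym)
  show "path_dist E d x y \<le> d {x, y}"
    using path_dist_le_walk_length[of x "[x, y]" y] assms(2) unfolding walk_betw_def by simp
  show "d {x, y} \<le> path_dist E d x y"
    using path_dist_attained[OF reachable_edge[OF assms(2)]] assms unfolding distance_fun_def by metis
qed

end

definition pseudometric :: "('a \<Rightarrow> 'a \<Rightarrow> real) \<Rightarrow> bool" where
  "pseudometric D \<longleftrightarrow> (\<forall>x. D x x = 0) \<and> (\<forall>x y. D x y = D y x) \<and> (\<forall>x y z. D x z \<le> D x y + D y z)"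

lemma pseudometric_nonneg: "pseudometric D \<Longrightarrow> 0 \<le> D x y"
proof -
  assume "pseudometric D"
  then have "D x x \<le> D x y + D y x" "D x x = 0" "D y x = D x y" unfolding pseudometric_def by blast+
  then show ?thesis by linarith
qed

lemma pseudometric_lipschitz:
  assumes "pseudometric D"
  shows "\<bar>D x a - D y a\<bar> \<le> D x y"
proof -
  have "D x a \<le> D x y + D y a" "D y a \<le> D y x + D x a" "D y x = D x y"
    using assms unfolding pseudometric_def by blast+
  then show ?thesis unfolding abs_le_iff by linarith
qed

lemma pseudometric_lipschitz_extension:
  assumes D: "pseudometric D" and C: "finite C" and f: "\<forall>a\<in>C. \<forall>b\<in>C. \<bar>f a - f b\<bar> \<le> D a b"
  obtains g where "\<forall>c\<in>C. g c = f c" "\<forall>x y. \<bar>g x - g y\<bar> \<le> D x y"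
proof (cases "C = {}")
  case True
  then show ?thesis using that[of "\<lambda>_. 0"] pseudometric_nonneg[OF D] by simp
next
  case False
  define g where "g x = Min ((\<lambda>c. f c + D x c) ` C)" for x
  have g_le: "g x \<le> f c + D x c" if "c \<in> C" for x c
    unfolding g_def using C that by (intro Min_le) auto
  have g_attained: "\<exists>c\<in>C. g x = f c + D x c" for x
  proof -
    have "g x \<in> (\<lambda>c. f c + D x c) ` C" unfolding g_def using C False by (intro Min_in) auto
    then show ?thesis by blast
  qed
  have g_diff: "g x - g y \<le> D x y" for x y
  proof -
    obtain c where c: "c \<in> C" "g y = f c + D y c" using g_attained by blast
    have "D x c \<le> D x y + D y c" using D unfolding pseudometric_def by blast
    then show ?thesis using g_le[OF c(1), of x] c(2) by linarith
  qed
  have "\<bar>g x - g y\<bar> \<le> D x y" for x y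
    using g_diff[of x y] g_diff[of y x] D unfolding pseudometric_def by (simp add: abs_le_iff)
  moreover have "g c = f c" if "c \<in> C" for c
  proof (rule antisym)
    show "g c \<le> f c" using g_le[OF that, of c] D unfolding pseudometric_def by simp
    obtain c' where c': "c' \<in> C" "g c = f c' + D c c'" using g_attained by blast
    have "f c - f c' \<le> D c c'" using f that c'(1) by (metis abs_le_D1)
    then show "f c \<le> g c" using c'(2) by linarith
  qed
  ultimately show ?thesis using that by blast
qed

text \<open>Pairs in different components of \<open>E\<close> are put at distance \<open>M\<close>, the total weight, which
  bounds every shortest path; this keeps the triangle inequality.\<close>
lemma distance_fun_pseudometric_extension:
  assumes E: "edge_set E" and d: "distance_fun E d"
  obtains D where "pseudometric D" "\<forall>x y. {x, y} \<in> E \<longrightarrow> D x y = d {x, y}"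
proof -
  note d_nonneg = distance_fun_nonneg[OF d]
  define M where "M = (\<Sum>e\<in>E. d e)"
  define D where "D x y = (if reachable E x y then path_dist E d x y else M)" for x y
  have D_bounds: "0 \<le> D x y" "D x y \<le> M" for x y
    using path_dist_nonneg[OF E d_nonneg] path_dist_le_sum[OF E d_nonneg] sum_nonneg[of E d] d_nonneg
    unfolding D_def M_def by auto
  have "D x z \<le> D x y + D y z" for x y z
  proof (cases "reachable E x y \<and> reachable E y z")
    case True
    then show ?thesis
      using path_dist_triangle[OF E d_nonneg] reachable_trans[of E x y z] unfolding D_def by auto
  next
    case False
    then have "D x y = M \<or> D y z = M" unfolding D_def by auto
    then show ?thesis using D_bounds[of x z] D_bounds[of x y] D_bounds[of y z] by linarith
  qed
  moreover have "D x y = D y x" for x y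
    using path_dist_sym[OF E d_nonneg, of x y] reachable_sym[of E x y] reachable_sym[of E y x]
    unfolding D_def by auto
  moreover have "D x x = 0" for x
    using path_dist_self[OF E d_nonneg] reachable_refl[of E x] unfolding D_def by simp
  ultimately have "pseudometric D" unfolding pseudometric_def by blast
  moreover have "\<forall>x y. {x, y} \<in> E \<longrightarrow> D x y = d {x, y}"
    using path_dist_edge[OF E d_nonneg d] reachable_edge[of _ _ E] unfolding D_def by simp
  ultimately show ?thesis using that by blast
qed

text \<open>Only meaningful for symmetric \<open>D\<close>; unspecified on sets that are not doubletons.\<close>
definition edge_fun :: "('a \<Rightarrow> 'a \<Rightarrow> real) \<Rightarrow> 'a set \<Rightarrow> real" where
  "edge_fun D e = (THE r. \<exists>x y. e = {x, y} \<and> r = D x y)"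

lemma edge_fun_doubleton: "\<forall>x y. D x y = D y x \<Longrightarrow> edge_fun D {x, y} = D x y"
  unfolding edge_fun_def by (rule the_equality) (auto simp: doubleton_eq_iff)

lemma pseudometric_le_walk_length:
  "pseudometric D \<Longrightarrow> xs \<noteq> [] \<Longrightarrow> D (hd xs) (last xs) \<le> walk_length (edge_fun D) xs"
proof (induction xs rule: induct_list012)
  case (3 x y zs)
  have "D x (last (y # zs)) \<le> D x y + D y (last (y # zs))"
    using "3.prems"(1) unfolding pseudometric_def by blast
  moreover have "edge_fun D {x, y} = D x y"
    using "3.prems"(1) edge_fun_doubleton[of D x y] unfolding pseudometric_def by blast
  ultimately show ?case using 3 by simp
qed (auto simp: pseudometric_def)

lemma pseudometric_distance_fun:
  assumes E: "edge_set E" and D: "pseudometric D"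
  shows "distance_fun E (edge_fun D)"
proof -
  have sym: "\<forall>x y. D x y = D y x" using D unfolding pseudometric_def by blast
  have "0 \<le> edge_fun D e" if "e \<in> E" for e
    using E that edge_fun_doubleton[OF sym] pseudometric_nonneg[OF D] unfolding edge_set_def by metis
  moreover have "edge_fun D {x, y} \<le> walk_length (edge_fun D) xs" if "walk_betw E x xs y" for x y xs
    using that pseudometric_le_walk_length[OF D] edge_fun_doubleton[OF sym] unfolding walk_betw_def
    by metis
  ultimately show ?thesis unfolding distance_fun_def by blast
qed

lemma distance_fun_extend:
  assumes E': "edge_set E'" and sub: "E \<subseteq> E'" and d: "distance_fun E d"
  obtains d' where "distance_fun E' d'" "\<forall>e\<in>E. d' e = d e"
proof -
  have E: "edge_set E" using edge_set_subset[OF E' sub] .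
  obtain D where D: "pseudometric D" and D_edge: "\<forall>x y. {x, y} \<in> E \<longrightarrow> D x y = d {x, y}"
    using distance_fun_pseudometric_extension[OF E d] by blast
  have "edge_fun D e = d e" if "e \<in> E" for e
    using E that D_edge edge_fun_doubleton[of D] D unfolding edge_set_def pseudometric_def by metis
  then show ?thesis using that pseudometric_distance_fun[OF E' D] by blast
qed

section \<open>Realizations in the sup-norm\<close>

lemma linf_dist_eq_iff:
  assumes "0 \<le> r"
  shows "linf_dist k x y = r \<longleftrightarrow> (\<forall>i<k. \<bar>x i - y i\<bar> \<le> r) \<and> (r = 0 \<or> (\<exists>i<k. \<bar>x i - y i\<bar> = r))"
proof -
  let ?S = "insert 0 ((\<lambda>i. \<bar>x i - y i\<bar>) ` {..<k})"
  have fin: "finite ?S" by simp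
  have "linf_dist k x y = r \<longleftrightarrow> (\<forall>a\<in>?S. a \<le> r) \<and> r \<in> ?S"
    unfolding linf_dist_def using Max_eqI[OF fin] Max_ge[OF fin] Max_in[OF fin insert_not_empty]
    by blast
  then show ?thesis using assms by auto
qed

definition edge_lipschitz :: "'a set set \<Rightarrow> ('a set \<Rightarrow> real) \<Rightarrow> ('a \<Rightarrow> real) \<Rightarrow> bool" where
  "edge_lipschitz E d g \<longleftrightarrow> (\<forall>x y. {x, y} \<in> E \<longrightarrow> \<bar>g x - g y\<bar> \<le> d {x, y})"

definition realizes :: "nat \<Rightarrow> 'a set set \<Rightarrow> ('a set \<Rightarrow> real) \<Rightarrow> ('a \<Rightarrow> nat \<Rightarrow> real) \<Rightarrow> bool" where
  "realizes k E d \<phi> \<longleftrightarrow> (\<forall>x y. {x, y} \<in> E \<longrightarrow> linf_dist k (\<phi> x) (\<phi> y) = d {x, y})"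

lemma realizes_iff:
  assumes "\<forall>e\<in>E. 0 \<le> d e"
  shows "realizes k E d \<phi> \<longleftrightarrow> (\<forall>i<k. edge_lipschitz E d (\<lambda>x. \<phi> x i)) \<and>
    (\<forall>x y. {x, y} \<in> E \<longrightarrow> d {x, y} = 0 \<or> (\<exists>i<k. \<bar>\<phi> x i - \<phi> y i\<bar> = d {x, y}))"
proof -
  have "linf_dist k (\<phi> x) (\<phi> y) = d {x, y} \<longleftrightarrow> (\<forall>i<k. \<bar>\<phi> x i - \<phi> y i\<bar> \<le> d {x, y}) \<and>
      (d {x, y} = 0 \<or> (\<exists>i<k. \<bar>\<phi> x i - \<phi> y i\<bar> = d {x, y}))" if "{x, y} \<in> E" for x y
    using linf_dist_eq_iff assms that by blast
  then show ?thesis unfolding realizes_def edge_lipschitz_def by blast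
qed

lemma realizes_Un: "realizes k (E1 \<union> E2) d \<phi> \<longleftrightarrow> realizes k E1 d \<phi> \<and> realizes k E2 d \<phi>"
  unfolding realizes_def by blast

lemma realizes_cong:
  assumes "realizes k E d \<phi>" "\<forall>x\<in>\<Union>E. \<forall>i<k. \<psi> x i = \<phi> x i"
  shows "realizes k E d \<psi>"
proof -
  have "linf_dist k (\<psi> x) (\<psi> y) = linf_dist k (\<phi> x) (\<phi> y)" if "{x, y} \<in> E" for x y
    using assms(2) that unfolding linf_dist_def by (intro arg_cong[where f = Max]) auto
  then show ?thesis using assms(1) unfolding realizes_def by simp
qed

lemma realizes_glue:
  assumes "realizes k E1 d \<phi>1" "realizes k E2 d \<phi>2"
    and "\<forall>x\<in>\<Union>E1 \<inter> \<Union>E2. \<forall>i<k. \<phi>1 x i = \<phi>2 x i"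
  shows "realizes k (E1 \<union> E2) d (\<lambda>x. if x \<in> \<Union>E1 then \<phi>1 x else \<phi>2 x)"
proof -
  let ?\<psi> = "\<lambda>x. if x \<in> \<Union>E1 then \<phi>1 x else \<phi>2 x"
  have "realizes k E1 d ?\<psi>" by (rule realizes_cong[OF assms(1)]) simp
  moreover have "realizes k E2 d ?\<psi>" by (rule realizes_cong[OF assms(2)]) (use assms(3) in auto)
  ultimately show ?thesis unfolding realizes_Un by blast
qed

lemma realizes_isometry:
  assumes d: "\<forall>e\<in>E. 0 \<le> d e" and \<phi>: "realizes k E d \<phi>"
    and \<sigma>: "\<sigma> ` {..<k} = {..<k}" and s: "\<forall>i<k. \<bar>s i\<bar> = 1"
  shows "realizes k E d (\<lambda>x i. s i * \<phi> x (\<sigma> i) + c i)"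
proof -
  have coord: "\<bar>(s i * \<phi> x (\<sigma> i) + c i) - (s i * \<phi> y (\<sigma> i) + c i)\<bar> = \<bar>\<phi> x (\<sigma> i) - \<phi> y (\<sigma> i)\<bar>"
    if "i < k" for x y i
  proof -
    have "(s i * \<phi> x (\<sigma> i) + c i) - (s i * \<phi> y (\<sigma> i) + c i) = s i * (\<phi> x (\<sigma> i) - \<phi> y (\<sigma> i))"
      by (simp add: right_diff_distrib)
    then show ?thesis using s that by (simp add: abs_mult)
  qed
  have lip: "\<forall>i<k. edge_lipschitz E d (\<lambda>x. \<phi> x i)"
    and att: "\<forall>x y. {x, y} \<in> E \<longrightarrow> d {x, y} = 0 \<or> (\<exists>i<k. \<bar>\<phi> x i - \<phi> y i\<bar> = d {x, y})"
    using \<phi> unfolding realizes_iff[OF d] by blast+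
  show ?thesis
    unfolding realizes_iff[OF d]
  proof (intro conjI allI impI)
    fix i assume "i < k"
    then have "\<sigma> i < k" using \<sigma> by blast
    then show "edge_lipschitz E d (\<lambda>x. s i * \<phi> x (\<sigma> i) + c i)"
      using lip coord[OF \<open>i < k\<close>] unfolding edge_lipschitz_def by simp
  next
    fix x y assume "{x, y} \<in> E"
    moreover have "\<exists>i<k. j = \<sigma> i" if "j < k" for j
      using \<sigma> that by (metis imageE lessThan_iff)
    ultimately show "d {x, y} = 0 \<or>
        (\<exists>i<k. \<bar>s i * \<phi> x (\<sigma> i) + c i - (s i * \<phi> y (\<sigma> i) + c i)\<bar> = d {x, y})"
      using att coord by metis
  qed
qed

lemma realizes_translate:
  assumes "\<forall>e\<in>E. 0 \<le> d e" "realizes k E d \<phi>"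
  shows "realizes k E d (\<lambda>x i. \<phi> x i - c i)"
  using realizes_isometry[OF assms, of id "\<lambda>_. 1" "\<lambda>i. - c i"] by simp

text \<open>Move a coordinate attaining \<open>d {v, w}\<close> to position \<open>j\<close>, flip its sign if necessary and
  translate.\<close>
lemma realizes_normalize:
  assumes d: "\<forall>e\<in>E. 0 \<le> d e" and \<phi>: "realizes k E d \<phi>" and vw: "{v, w} \<in> E" and j: "j < k"
  obtains \<psi> where "realizes k E d \<psi>" "\<psi> v j = 0" "\<psi> w j = d {v, w}"
proof -
  obtain i where i: "i < k" "\<bar>\<phi> w i - \<phi> v i\<bar> = d {v, w}"
  proof (cases "d {v, w} = 0")
    case True
    then have "\<bar>\<phi> w j - \<phi> v j\<bar> \<le> d {v, w}"
      using \<phi> vw j unfolding realizes_iff[OF d] edge_lipschitz_def by (metis abs_minus_commute)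
    then show ?thesis using that j True by fastforce
  next
    case False
    then show ?thesis using that \<phi> vw unfolding realizes_iff[OF d] by (metis abs_minus_commute)
  qed
  define s where "s = (if \<phi> v i \<le> \<phi> w i then 1 else - 1 :: real)"
  let ?\<psi> = "\<lambda>x t. s * \<phi> x (transpose j i t) + (- s * \<phi> v i)"
  have "realizes k E d ?\<psi>"
    using realizes_isometry[OF d \<phi>, of "transpose j i" "\<lambda>_. s" "\<lambda>_. - s * \<phi> v i"] i j
    unfolding s_def by simp
  moreover have "?\<psi> v j = 0" by simp
  moreover have "?\<psi> w j = d {v, w}" using i(2) unfolding s_def by (auto simp: abs_if algebra_simps)
  ultimately show ?thesis by (rule that)
qed

lemma realizes_append:
  assumes d: "\<forall>e\<in>E. 0 \<le> d e" and \<phi>: "realizes k E d \<phi>" and g: "\<forall>j<m. edge_lipschitz E d (g j)"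
  shows "realizes (k + m) E d (\<lambda>x i. if i < k then \<phi> x i else g (i - k) x)"
  unfolding realizes_iff[OF d]
proof (intro conjI allI impI)
  fix i assume "i < k + m"
  then show "edge_lipschitz E d (\<lambda>x. if i < k then \<phi> x i else g (i - k) x)"
    using \<phi> g unfolding realizes_iff[OF d] by (cases "i < k") auto
next
  fix x y assume "{x, y} \<in> E"
  then consider "d {x, y} = 0" | i where "i < k" "\<bar>\<phi> x i - \<phi> y i\<bar> = d {x, y}"
    using \<phi> unfolding realizes_iff[OF d] by blast
  then show "d {x, y} = 0 \<or> (\<exists>i<k + m. \<bar>(if i < k then \<phi> x i else g (i - k) x) -
      (if i < k then \<phi> y i else g (i - k) y)\<bar> = d {x, y})"
  proof cases
    case (2 i)
    then show ?thesis by (intro disjI2 exI[of _ i]) simp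
  qed simp
qed

lemma realizes_prepend:
  assumes d: "\<forall>e\<in>E. 0 \<le> d e" and g: "\<forall>j<m. edge_lipschitz E d (g j)" and \<phi>: "realizes k E d \<phi>"
  shows "realizes (m + k) E d (\<lambda>x i. if i < m then g i x else \<phi> x (i - m))"
  unfolding realizes_iff[OF d]
proof (intro conjI allI impI)
  fix i assume "i < m + k"
  then show "edge_lipschitz E d (\<lambda>x. if i < m then g i x else \<phi> x (i - m))"
    using \<phi> g unfolding realizes_iff[OF d] by (cases "i < m") auto
next
  fix x y assume "{x, y} \<in> E"
  then consider "d {x, y} = 0" | i where "i < k" "\<bar>\<phi> x i - \<phi> y i\<bar> = d {x, y}"
    using \<phi> unfolding realizes_iff[OF d] by blast
  then show "d {x, y} = 0 \<or> (\<exists>i<m + k. \<bar>(if i < m then g i x else \<phi> x (i - m)) -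
      (if i < m then g i y else \<phi> y (i - m))\<bar> = d {x, y})"
  proof cases
    case (2 i)
    then show ?thesis by (intro disjI2 exI[of _ "m + i"]) simp
  qed simp
qed

section \<open>The parameter on edge sets\<close>

definition realizable :: "nat \<Rightarrow> 'a set set \<Rightarrow> bool" where
  "realizable k E \<longleftrightarrow> (\<forall>d. distance_fun E d \<longrightarrow> (\<exists>\<phi>. realizes k E d \<phi>))"

definition f_inf_edges :: "'a set set \<Rightarrow> nat" where
  "f_inf_edges E = (LEAST k. realizable k E)"

lemma realizable_vertex_count:
  assumes E: "edge_set E"
  shows "realizable (card (\<Union>E)) E"
  unfolding realizable_def
proof (intro allI impI)
  fix d assume d: "distance_fun E d"
  obtain D where D: "pseudometric D" and D_edge: "\<forall>x y. {x, y} \<in> E \<longrightarrow> D x y = d {x, y}"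
    using distance_fun_pseudometric_extension[OF E d] by blast
  obtain vs where vs: "set vs = \<Union>E" "distinct vs"
    using finite_distinct_list[OF edge_set_finite_vertices[OF E]] by blast
  have "realizes (length vs) E d (\<lambda>x i. D x (vs ! i))"
    unfolding realizes_iff[OF distance_fun_nonneg[OF d]] edge_lipschitz_def
  proof (intro conjI allI impI)
    fix i x y assume "{x, y} \<in> E"
    then show "\<bar>D x (vs ! i) - D y (vs ! i)\<bar> \<le> d {x, y}"
      using pseudometric_lipschitz[OF D] D_edge by metis
  next
    fix x y assume xy: "{x, y} \<in> E"
    then obtain i where "i < length vs" "vs ! i = y" using vs(1)
      by (metis UnionI in_set_conv_nth insertCI)
    moreover have "\<bar>D x y - D y y\<bar> = d {x, y}"
      using D D_edge xy pseudometric_nonneg[OF D, of x y] unfolding pseudometric_def by auto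
    ultimately show "d {x, y} = 0 \<or> (\<exists>i<length vs. \<bar>D x (vs ! i) - D y (vs ! i)\<bar> = d {x, y})"
      by metis
  qed
  then show "\<exists>\<phi>. realizes (card (\<Union>E)) E d \<phi>" using vs distinct_card by metis
qed

lemma realizable_f_inf_edges: "edge_set E \<Longrightarrow> realizable (f_inf_edges E) E"
  unfolding f_inf_edges_def by (rule LeastI) (rule realizable_vertex_count)

lemma f_inf_edges_le: "realizable k E \<Longrightarrow> f_inf_edges E \<le> k"
  unfolding f_inf_edges_def by (rule Least_le)

lemma realizable_mono:
  assumes "realizable k E" "k \<le> k'"
  shows "realizable k' E"
  unfolding realizable_def
proof (intro allI impI)
  fix d assume d: "distance_fun E d"
  then obtain \<phi> where "realizes k E d \<phi>" using assms(1) unfolding realizable_def by blast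
  moreover have "\<forall>j<k' - k. edge_lipschitz E d (\<lambda>_. 0)"
    using distance_fun_nonneg[OF d] unfolding edge_lipschitz_def by simp
  ultimately have "realizes (k + (k' - k)) E d (\<lambda>x i. if i < k then \<phi> x i else 0)"
    using realizes_append[OF distance_fun_nonneg[OF d], of k \<phi> "k' - k" "\<lambda>_ _. 0"] by simp
  then show "\<exists>\<phi>. realizes k' E d \<phi>" using assms(2) by auto
qed

lemma realizable_subset:
  assumes "edge_set E'" "E \<subseteq> E'" "realizable k E'"
  shows "realizable k E"
  unfolding realizable_def
proof (intro allI impI)
  fix d assume "distance_fun E d"
  then obtain d' where "distance_fun E' d'" "\<forall>e\<in>E. d' e = d e"
    using distance_fun_extend assms(1,2) by blast
  moreover obtain \<phi> where "realizes k E' d' \<phi>" using assms(3) calculation(1)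
    unfolding realizable_def by blast
  ultimately have "realizes k E d \<phi>" using assms(2) unfolding realizes_def by auto
  then show "\<exists>\<phi>. realizes k E d \<phi>" by blast
qed

lemma f_inf_edges_mono: "edge_set E' \<Longrightarrow> E \<subseteq> E' \<Longrightarrow> f_inf_edges E \<le> f_inf_edges E'"
  using f_inf_edges_le realizable_subset realizable_f_inf_edges by blast

lemma f_inf_edges_pos:
  assumes E: "edge_set E" and "{v, w} \<in> E"
  shows "0 < f_inf_edges E"
proof (rule ccontr)
  assume "\<not> 0 < f_inf_edges E"
  then have "realizable 0 E" using realizable_f_inf_edges[OF E] by simp
  moreover have "distance_fun E (\<lambda>_. 1)"
    unfolding distance_fun_def walk_length_one using walk_betw_two_vertices edge_set_edge_neq[OF E]
    by fastforce
  ultimately obtain \<phi> where "realizes 0 E (\<lambda>_. 1) \<phi>" unfolding realizable_def by blast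
  then show False using assms(2) unfolding realizes_def linf_dist_def by simp
qed

section \<open>Clique sums\<close>

definition edge_clique :: "'a set set \<Rightarrow> 'a set \<Rightarrow> bool" where
  "edge_clique E C \<longleftrightarrow> (\<forall>a\<in>C. \<forall>b\<in>C. a \<noteq> b \<longrightarrow> {a, b} \<in> E)"

lemma edge_lipschitz_extension:
  assumes E: "edge_set E" and d: "distance_fun E d" and C: "finite C" "edge_clique E C"
    and f: "\<forall>a\<in>C. \<forall>b\<in>C. a \<noteq> b \<longrightarrow> \<bar>f a - f b\<bar> \<le> d {a, b}"
  obtains g where "\<forall>c\<in>C. g c = f c" "edge_lipschitz E d g"
proof -
  obtain D where D: "pseudometric D" and D_edge: "\<forall>x y. {x, y} \<in> E \<longrightarrow> D x y = d {x, y}"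
    using distance_fun_pseudometric_extension[OF E d] by blast
  have "\<bar>f a - f b\<bar> \<le> D a b" if "a \<in> C" "b \<in> C" for a b
  proof (cases "a = b")
    case True
    then show ?thesis using D unfolding pseudometric_def by simp
  next
    case False
    then have "{a, b} \<in> E" using C(2) that unfolding edge_clique_def by blast
    then show ?thesis using f D_edge that False by simp
  qed
  then obtain g where g: "\<forall>c\<in>C. g c = f c" "\<forall>x y. \<bar>g x - g y\<bar> \<le> D x y"
    using pseudometric_lipschitz_extension[OF D C(1)] by blast
  have "edge_lipschitz E d g"
    unfolding edge_lipschitz_def
  proof (intro allI impI)
    fix x y assume "{x, y} \<in> E"
    then have "D x y = d {x, y}" using D_edge by blast
    moreover have "\<bar>g x - g y\<bar> \<le> D x y" using g(2) by blast
    ultimately show "\<bar>g x - g y\<bar> \<le> d {x, y}" by simp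
  qed
  with g(1) show ?thesis by (rule that)
qed

lemma realizes_extend_from_clique:
  assumes E: "edge_set E" and d: "distance_fun E d"
    and C: "finite C" "edge_clique E C" "edge_clique E' C"
    and d': "\<forall>e\<in>E'. 0 \<le> d e" and \<phi>: "realizes k E' d \<phi>"
  obtains G where "\<forall>i<k. (\<forall>c\<in>C. G i c = \<phi> c i) \<and> edge_lipschitz E d (G i)"
proof -
  have "\<exists>g. (\<forall>c\<in>C. g c = \<phi> c i) \<and> edge_lipschitz E d g" if "i < k" for i
  proof -
    have "edge_lipschitz E' d (\<lambda>x. \<phi> x i)" using \<phi> that unfolding realizes_iff[OF d'] by blast
    then have "\<forall>a\<in>C. \<forall>b\<in>C. a \<noteq> b \<longrightarrow> \<bar>\<phi> a i - \<phi> b i\<bar> \<le> d {a, b}"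
      using C(3) unfolding edge_clique_def edge_lipschitz_def by blast
    then obtain g where "\<forall>c\<in>C. g c = \<phi> c i" "edge_lipschitz E d g"
      by (rule edge_lipschitz_extension[OF E d C(1,2)])
    then show ?thesis by blast
  qed
  then have "\<forall>i. \<exists>g. i < k \<longrightarrow> (\<forall>c\<in>C. g c = \<phi> c i) \<and> edge_lipschitz E d g" by blast
  from choice[OF this] show ?thesis using that by blast
qed

text \<open>The last \<open>s\<close> coordinates of \<open>\<phi>1\<close> are identified with the first \<open>s\<close> coordinates of \<open>\<phi>2\<close>.
  On \<open>E1\<close> the remaining coordinates of \<open>\<phi>2\<close> are appended after extending them from the clique,
  on \<open>E2\<close> the remaining coordinates of \<open>\<phi>1\<close> are prepended in the same way; both maps agree on
  the clique and can be glued.\<close>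
lemma realizes_clique_glue:
  assumes E1: "edge_set E1" and E2: "edge_set E2"
    and C: "finite C" "\<Union>E1 \<inter> \<Union>E2 \<subseteq> C" "edge_clique E1 C" "edge_clique E2 C"
    and d: "distance_fun (E1 \<union> E2) d"
    and \<phi>1: "realizes k1 E1 d \<phi>1" and \<phi>2: "realizes k2 E2 d \<phi>2"
    and s: "s \<le> k1" "s \<le> k2" and overlap: "\<forall>c\<in>C. \<forall>t<s. \<phi>1 c (k1 - s + t) = \<phi>2 c t"
  shows "\<exists>\<psi>. realizes (k1 + k2 - s) (E1 \<union> E2) d \<psi>"
proof -
  have d1: "distance_fun E1 d" and d2: "distance_fun E2 d" using distance_fun_mono[OF d] by blast+
  note nonneg1 = distance_fun_nonneg[OF d1] and nonneg2 = distance_fun_nonneg[OF d2]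
  obtain G1 where G1: "\<forall>i<k1. (\<forall>c\<in>C. G1 i c = \<phi>1 c i) \<and> edge_lipschitz E2 d (G1 i)"
    using realizes_extend_from_clique[OF E2 d2 C(1,4,3) nonneg1 \<phi>1] by blast
  obtain G2 where G2: "\<forall>i<k2. (\<forall>c\<in>C. G2 i c = \<phi>2 c i) \<and> edge_lipschitz E1 d (G2 i)"
    using realizes_extend_from_clique[OF E1 d1 C(1,3,4) nonneg2 \<phi>2] by blast
  define \<psi>1 where "\<psi>1 x i = (if i < k1 then \<phi>1 x i else G2 (i - k1 + s) x)" for x i
  define \<psi>2 where "\<psi>2 x i = (if i < k1 - s then G1 i x else \<phi>2 x (i - (k1 - s)))" for x i
  have "realizes (k1 + k2 - s) E1 d \<psi>1"
    using realizes_append[OF nonneg1 \<phi>1, of "k2 - s" "\<lambda>j. G2 (j + s)"] G2 s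
    unfolding \<psi>1_def by simp
  moreover have "realizes (k1 + k2 - s) E2 d \<psi>2"
    using realizes_prepend[OF nonneg2 _ \<phi>2, of "k1 - s" G1] G1 s
    unfolding \<psi>2_def by simp
  moreover have "\<psi>1 c i = \<psi>2 c i" if c: "c \<in> C" and i: "i < k1 + k2 - s" for c i
  proof -
    consider "i < k1 - s" | "k1 - s \<le> i" "i < k1" | "k1 \<le> i" by linarith
    then show ?thesis
    proof cases
      case 1
      then have "i < k1" by linarith
      then show ?thesis using 1 G1 c unfolding \<psi>1_def \<psi>2_def by simp
    next
      case 2
      then have "i - (k1 - s) < s" "k1 - s + (i - (k1 - s)) = i" by linarith+
      then have "\<phi>1 c i = \<phi>2 c (i - (k1 - s))" using overlap c by metis
      then show ?thesis using 2 unfolding \<psi>1_def \<psi>2_def by simp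
    next
      case 3
      then have "i - k1 + s < k2" "i - (k1 - s) = i - k1 + s" "\<not> i < k1 - s" using i s by linarith+
      then show ?thesis using 3 G2 c unfolding \<psi>1_def \<psi>2_def by simp
    qed
  qed
  ultimately have "realizes (k1 + k2 - s) (E1 \<union> E2) d (\<lambda>x. if x \<in> \<Union>E1 then \<psi>1 x else \<psi>2 x)"
    using C(2) by (intro realizes_glue) auto
  then show ?thesis by blast
qed

lemma f_inf_edges_one_sum:
  assumes E1: "edge_set E1" and E2: "edge_set E2" and I: "\<Union>E1 \<inter> \<Union>E2 \<subseteq> {v}"
  shows "f_inf_edges (E1 \<union> E2) \<le> max (f_inf_edges E1) (f_inf_edges E2)"
proof (rule f_inf_edges_le, unfold realizable_def, intro allI impI)
  let ?K = "max (f_inf_edges E1) (f_inf_edges E2)"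
  fix d assume d: "distance_fun (E1 \<union> E2) d"
  have d1: "distance_fun E1 d" and d2: "distance_fun E2 d" using distance_fun_mono[OF d] by blast+
  obtain \<phi>1 where \<phi>1: "realizes ?K E1 d \<phi>1"
    using realizable_mono[OF realizable_f_inf_edges[OF E1], of ?K] d1 unfolding realizable_def by auto
  obtain \<phi>2 where \<phi>2: "realizes ?K E2 d \<phi>2"
    using realizable_mono[OF realizable_f_inf_edges[OF E2], of ?K] d2 unfolding realizable_def by auto
  have "\<exists>\<psi>. realizes (?K + ?K - ?K) (E1 \<union> E2) d \<psi>"
    using realizes_translate[OF distance_fun_nonneg[OF d1] \<phi>1, of "\<phi>1 v"]
      realizes_translate[OF distance_fun_nonneg[OF d2] \<phi>2, of "\<phi>2 v"]
    by (intro realizes_clique_glue[OF E1 E2 _ I _ _ d, of ?K _ ?K _ ?K]) (auto simp: edge_clique_def)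
  then show "\<exists>\<psi>. realizes ?K (E1 \<union> E2) d \<psi>" by simp
qed

lemma f_inf_edges_two_sum:
  assumes E1: "edge_set E1" and E2: "edge_set E2" and I: "\<Union>E1 \<inter> \<Union>E2 \<subseteq> {v, w}"
    and vw1: "{v, w} \<in> E1" and vw2: "{v, w} \<in> E2"
  shows "f_inf_edges (E1 \<union> E2) + 1 \<le> f_inf_edges E1 + f_inf_edges E2"
proof -
  let ?k1 = "f_inf_edges E1" and ?k2 = "f_inf_edges E2"
  have pos: "0 < ?k1" "0 < ?k2" using f_inf_edges_pos[OF E1 vw1] f_inf_edges_pos[OF E2 vw2] .
  have "realizable (?k1 + ?k2 - 1) (E1 \<union> E2)"
    unfolding realizable_def
  proof (intro allI impI)
    fix d assume d: "distance_fun (E1 \<union> E2) d"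
    have d1: "distance_fun E1 d" and d2: "distance_fun E2 d" using distance_fun_mono[OF d] by blast+
    note nonneg1 = distance_fun_nonneg[OF d1] and nonneg2 = distance_fun_nonneg[OF d2]
    have j: "?k1 - 1 < ?k1" "0 < ?k2" using pos by simp_all
    obtain \<phi>1 where \<phi>1: "realizes ?k1 E1 d \<phi>1"
      using realizable_f_inf_edges[OF E1] d1 unfolding realizable_def by blast
    obtain \<psi>1 where \<psi>1: "realizes ?k1 E1 d \<psi>1" "\<psi>1 v (?k1 - 1) = 0" "\<psi>1 w (?k1 - 1) = d {v, w}"
      by (rule realizes_normalize[OF nonneg1 \<phi>1 vw1 j(1)])
    obtain \<phi>2 where \<phi>2: "realizes ?k2 E2 d \<phi>2"
      using realizable_f_inf_edges[OF E2] d2 unfolding realizable_def by blast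
    obtain \<psi>2 where \<psi>2: "realizes ?k2 E2 d \<psi>2" "\<psi>2 v 0 = 0" "\<psi>2 w 0 = d {v, w}"
      by (rule realizes_normalize[OF nonneg2 \<phi>2 vw2 j(2)])
    have "edge_clique E1 {v, w}" "edge_clique E2 {v, w}"
      using vw1 vw2 insert_commute[of w v "{}"] unfolding edge_clique_def by auto
    moreover have "\<forall>c\<in>{v, w}. \<forall>t<1. \<psi>1 c (?k1 - 1 + t) = \<psi>2 c t" using \<psi>1 \<psi>2 by simp
    moreover have "finite {v, w}" "1 \<le> ?k1" "1 \<le> ?k2" using pos by simp_all
    ultimately show "\<exists>\<psi>. realizes (?k1 + ?k2 - 1) (E1 \<union> E2) d \<psi>"
      using realizes_clique_glue[OF E1 E2 _ I _ _ d \<psi>1(1) \<psi>2(1)] by blast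
  qed
  then have "f_inf_edges (E1 \<union> E2) \<le> ?k1 + ?k2 - 1" by (rule f_inf_edges_le)
  then show ?thesis using pos by linarith
qed

lemma f_inf_edges_clique_sum:
  assumes E1: "edge_set E1" and E2: "edge_set E2"
    and C: "finite C" "\<Union>E1 \<inter> \<Union>E2 \<subseteq> C" "edge_clique E1 C" "edge_clique E2 C"
  shows "f_inf_edges (E1 \<union> E2) \<le> f_inf_edges E1 + f_inf_edges E2"
proof (rule f_inf_edges_le, unfold realizable_def, intro allI impI)
  fix d assume d: "distance_fun (E1 \<union> E2) d"
  have d1: "distance_fun E1 d" and d2: "distance_fun E2 d" using distance_fun_mono[OF d] by blast+
  obtain \<phi>1 where "realizes (f_inf_edges E1) E1 d \<phi>1"
    using realizable_f_inf_edges[OF E1] d1 unfolding realizable_def by blast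
  moreover obtain \<phi>2 where "realizes (f_inf_edges E2) E2 d \<phi>2"
    using realizable_f_inf_edges[OF E2] d2 unfolding realizable_def by blast
  ultimately show "\<exists>\<psi>. realizes (f_inf_edges E1 + f_inf_edges E2) (E1 \<union> E2) d \<psi>"
    using realizes_clique_glue[OF E1 E2 C d, of _ _ _ _ 0] by simp
qed

lemma graph_edge_set:
  assumes "graph G"
  shows "edge_set (edges G)"
proof -
  have "edges G \<subseteq> Pow (verts G)" using assms unfolding graph_def by auto
  then have "finite (edges G)" using assms unfolding graph_def by (meson finite_Pow_iff finite_subset)
  then show ?thesis using assms unfolding graph_def edge_set_def by blast
qed

lemma graph_vertices: "graph G \<Longrightarrow> \<Union>(edges G) \<subseteq> verts G"
  unfolding graph_def by auto

lemma graph_on_union: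
  assumes "graph G1" "graph G2" "E \<subseteq> edges G1 \<union> edges G2"
  shows "graph (verts G1 \<union> verts G2, E)"
proof -
  let ?V = "verts G1 \<union> verts G2"
  have "\<exists>u v. e = {u, v} \<and> u \<noteq> v \<and> u \<in> ?V \<and> v \<in> ?V" if "e \<in> E" for e
  proof -
    from that assms(3) consider "e \<in> edges G1" | "e \<in> edges G2" by blast
    then obtain u v where "e = {u, v}" "u \<noteq> v" "u \<in> ?V" "v \<in> ?V"
    proof cases
      case 1
      then show ?thesis using assms(1) that unfolding graph_def by blast
    next
      case 2
      then show ?thesis using assms(2) that unfolding graph_def by blast
    qed
    then show ?thesis by blast
  qed
  moreover have "finite ?V" using assms(1,2) unfolding graph_def by blast
  ultimately show ?thesis unfolding graph_def verts_def edges_def by simp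
qed

lemma is_path_iff:
  "is_path G xs v w \<longleftrightarrow> walk_betw (edges G) v xs w \<and> distinct xs \<and> set xs \<subseteq> verts G"
  unfolding is_path_def walk_betw_def walk_iff_nth by blast

lemma distance_function_iff:
  assumes G: "graph G"
  shows "distance_function G d \<longleftrightarrow> distance_fun (edges G) d"
proof
  assume d: "distance_function G d"
  have nonneg: "\<forall>e\<in>edges G. 0 \<le> d e" using d unfolding distance_function_def by blast
  have "d {v, w} \<le> walk_length d xs"
    if vw: "{v, w} \<in> edges G" and xs: "walk_betw (edges G) v xs w" for v w xs
  proof -
    obtain ys where ys: "walk_betw (edges G) v ys w" "distinct ys" "set ys \<subseteq> set xs"
      "walk_length d ys \<le> walk_length d xs"
      using walk_betw_shorten[OF xs nonneg] by blast
    have "set xs \<subseteq> verts G"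
      using walk_vertices[of "edges G" xs] xs vw graph_vertices[OF G] unfolding walk_betw_def by blast
    then have "is_path G ys v w" using ys unfolding is_path_iff by blast
    then have "d {v, w} \<le> walk_length d ys"
      using d vw unfolding distance_function_def path_length_eq_walk_length by blast
    with ys(4) show ?thesis by linarith
  qed
  with nonneg show "distance_fun (edges G) d" unfolding distance_fun_def by blast
next
  assume "distance_fun (edges G) d"
  then show "distance_function G d"
    unfolding distance_function_def distance_fun_def is_path_iff path_length_eq_walk_length by blast
qed

lemma f_inf_eq_f_inf_edges: "graph G \<Longrightarrow> f_inf G = f_inf_edges (edges G)"
  unfolding f_inf_def f_inf_edges_def realizable_def realizes_def by (simp add: distance_function_iff)

lemma f_inf_graph_union:
  assumes "graph G1" "graph G2"
  shows "graph (graph_union G1 G2)" "f_inf (graph_union G1 G2) = f_inf_edges (edges G1 \<union> edges G2)"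
proof -
  show G: "graph (graph_union G1 G2)"
    unfolding graph_union_def using graph_on_union[OF assms] by blast
  show "f_inf (graph_union G1 G2) = f_inf_edges (edges G1 \<union> edges G2)"
    using f_inf_eq_f_inf_edges[OF G] unfolding graph_union_def edges_def by simp
qed

lemma f_inf_one_sum:
  assumes G1: "graph G1" and G2: "graph G2" and I: "verts G1 \<inter> verts G2 = {v}"
  shows "f_inf (graph_union G1 G2) = max (f_inf G1) (f_inf G2)"
proof -
  note E1 = graph_edge_set[OF G1] and E2 = graph_edge_set[OF G2]
  have "\<Union>(edges G1) \<inter> \<Union>(edges G2) \<subseteq> {v}" using graph_vertices[OF G1] graph_vertices[OF G2] I by blast
  then have "f_inf_edges (edges G1 \<union> edges G2) \<le> max (f_inf_edges (edges G1)) (f_inf_edges (edges G2))"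
    by (rule f_inf_edges_one_sum[OF E1 E2])
  moreover have "f_inf_edges (edges G1) \<le> f_inf_edges (edges G1 \<union> edges G2)"
    "f_inf_edges (edges G2) \<le> f_inf_edges (edges G1 \<union> edges G2)"
    using f_inf_edges_mono[OF edge_set_Un[OF E1 E2]] by blast+
  ultimately show ?thesis
    unfolding f_inf_graph_union[OF G1 G2] f_inf_eq_f_inf_edges[OF G1] f_inf_eq_f_inf_edges[OF G2]
    by linarith
qed

lemma f_inf_delete_edge:
  assumes G: "graph G"
  shows "f_inf (delete_edge G e) \<le> f_inf G"
proof -
  have "graph (delete_edge G e)"
    using graph_on_union[OF G G, of "edges G - {e}"] unfolding delete_edge_def by simp
  then show ?thesis
    using f_inf_edges_mono[OF graph_edge_set[OF G], of "edges G - {e}"]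
    unfolding f_inf_eq_f_inf_edges[OF G] by (simp add: f_inf_eq_f_inf_edges delete_edge_def edges_def)
qed

lemma f_inf_two_sum:
  assumes G1: "graph G1" and G2: "graph G2" and I: "verts G1 \<inter> verts G2 = {v, w}"
    and vw1: "{v, w} \<in> edges G1" and vw2: "{v, w} \<in> edges G2"
  shows "int (f_inf (graph_union G1 G2)) \<le> int (f_inf G1) + int (f_inf G2) - 1"
proof -
  have "\<Union>(edges G1) \<inter> \<Union>(edges G2) \<subseteq> {v, w}"
    using graph_vertices[OF G1] graph_vertices[OF G2] I by blast
  then have "f_inf_edges (edges G1 \<union> edges G2) + 1 \<le> f_inf_edges (edges G1) + f_inf_edges (edges G2)"
    by (rule f_inf_edges_two_sum[OF graph_edge_set[OF G1] graph_edge_set[OF G2] _ vw1 vw2])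
  then show ?thesis
    unfolding f_inf_graph_union[OF G1 G2] f_inf_eq_f_inf_edges[OF G1] f_inf_eq_f_inf_edges[OF G2]
    by linarith
qed

lemma f_inf_k_sum:
  assumes G1: "graph G1" and G2: "graph G2" and G: "is_k_sum k G G1 G2"
  shows "f_inf G \<le> f_inf G1 + f_inf G2"
proof -
  define C where "C = verts G1 \<inter> verts G2"
  obtain F where G_eq: "G = (verts G1 \<union> verts G2, (edges G1 \<union> edges G2) - F)"
    and "is_clique G1 C" "is_clique G2 C"
    using G unfolding is_k_sum_def Let_def C_def by blast
  then have cliques: "edge_clique (edges G1) C" "edge_clique (edges G2) C"
    unfolding is_clique_def edge_clique_def by blast+
  have "finite C" using G1 unfolding C_def graph_def by blast
  moreover have "\<Union>(edges G1) \<inter> \<Union>(edges G2) \<subseteq> C"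
    using graph_vertices[OF G1] graph_vertices[OF G2] unfolding C_def by blast
  ultimately have "f_inf_edges (edges G1 \<union> edges G2) \<le> f_inf_edges (edges G1) + f_inf_edges (edges G2)"
    using f_inf_edges_clique_sum[OF graph_edge_set[OF G1] graph_edge_set[OF G2]] cliques by blast
  moreover have "graph G" unfolding G_eq by (rule graph_on_union[OF G1 G2]) blast
  moreover have "f_inf_edges (edges G) \<le> f_inf_edges (edges G1 \<union> edges G2)"
    using f_inf_edges_mono[OF edge_set_Un[OF graph_edge_set[OF G1] graph_edge_set[OF G2]],
        of "edges G1 \<union> edges G2 - F"]
    unfolding G_eq by (simp add: edges_def)
  ultimately show ?thesis unfolding f_inf_eq_f_inf_edges[OF G1] f_inf_eq_f_inf_edges[OF G2]
    by (simp add: f_inf_eq_f_inf_edges)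
qed

theorem mainTheorem10:
  shows "(\<forall>(G1 :: 'a graph) G2 v. graph G1 \<and> graph G2 \<and> verts G1 \<inter> verts G2 = {v} \<longrightarrow>
            f_inf (graph_union G1 G2) = max (f_inf G1) (f_inf G2))
       \<and> (\<forall>(G1 :: 'a graph) G2 v w. graph G1 \<and> graph G2 \<and> v \<noteq> w \<and>
            verts G1 \<inter> verts G2 = {v, w} \<and> {v, w} \<in> edges G1 \<and> {v, w} \<in> edges G2 \<longrightarrow>
            f_inf (delete_edge (graph_union G1 G2) {v, w}) \<le> f_inf (graph_union G1 G2) \<and>
            int (f_inf (graph_union G1 G2)) \<le> int (f_inf G1) + int (f_inf G2) - 1)
       \<and> (\<forall>(G :: 'a graph) G1 G2 k. graph G1 \<and> graph G2 \<and> is_k_sum k G G1 G2 \<longrightarrow>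
            f_inf G \<le> f_inf G1 + f_inf G2)"
proof (intro conjI allI impI; elim conjE)
  fix G1 G2 :: "'a graph" and v
  assume "graph G1" "graph G2" "verts G1 \<inter> verts G2 = {v}"
  then show "f_inf (graph_union G1 G2) = max (f_inf G1) (f_inf G2)" by (rule f_inf_one_sum)
next
  fix G1 G2 :: "'a graph" and v w
  assume "graph G1" "graph G2"
  then show "f_inf (delete_edge (graph_union G1 G2) {v, w}) \<le> f_inf (graph_union G1 G2)"
    by (intro f_inf_delete_edge f_inf_graph_union)
next
  fix G1 G2 :: "'a graph" and v w
  assume "graph G1" "graph G2" "verts G1 \<inter> verts G2 = {v, w}" "{v, w} \<in> edges G1" "{v, w} \<in> edges G2"
  then show "int (f_inf (graph_union G1 G2)) \<le> int (f_inf G1) + int (f_inf G2) - 1"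
    by (rule f_inf_two_sum)
next
  fix G G1 G2 :: "'a graph" and k
  assume "graph G1" "graph G2" "is_k_sum k G G1 G2"
  then show "f_inf G \<le> f_inf G1 + f_inf G2" by (rule f_inf_k_sum)
qed

end
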